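(* Let $n$ be a positive integer such that $2^n-1\geq 7$ is a prime. Then for every $a\in\mathbb{F}_2$ there exists a primitive element $\alpha\in\mathbb{F}_{2^n}$ such that $\alpha+\alpha^{-1}$ is also primitive and $\mathrm{Tr}_{\mathbb{F}_{2^n}|\mathbb{F}_2}(\alpha)=a$.
   Context: A primitive element of $\mathbb{F}_{2^n}$ is a generator of $\mathbb{F}_{2^n}^*$. $\mathrm{Tr}_{\mathbb{F}_{2^n}|\mathbb{F}_2}(\alpha)=\alpha+\alpha^2+\cdots+\alpha^{2^{n-1}}$. *)

theory Defs
  imports Main "HOL-Computational_Algebra.Primes" "HOL-Library.Cardinality"
begin

definition primitive_element :: "'a::{field,finite} \<Rightarrow> bool" where
  "primitive_element \<alpha> \<longleftrightarrow> \<alpha> \<noteq> 0 \<and> (\<forall>x. x \<noteq> 0 \<longrightarrow> (\<exists>k::nat. x = \<alpha> ^ k))"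

definition trace2 :: "nat \<Rightarrow> 'a::field \<Rightarrow> 'a" where
  "trace2 n \<alpha> = (\<Sum>i<n. \<alpha> ^ (2 ^ i))"

end

theory Submission
  imports Defs "HOL-Computational_Algebra.Polynomial"
begin

text \<open>
  Since \<open>2^n - 1\<close> is prime, the multiplicative group of the field with \<open>2^n\<close> elements has
  prime order, so every element other than \<open>0\<close> and \<open>1\<close> is primitive. The trace takes only
  the values \<open>0\<close> and \<open>1\<close> and is a polynomial of degree \<open>2^(n-1)\<close>, so each of its two
  fibres has at most, hence exactly, \<open>2^(n-1) \<ge> 4\<close> elements; pick \<open>\<alpha> \<notin> {0, 1}\<close> in the
  required fibre. Then \<open>\<alpha> + \<alpha>\<inverse> = 0\<close> or \<open>1\<close> would force \<open>\<alpha>\<^sup>2 = 1\<close> or \<open>\<alpha>\<^sup>3 = 1\<close>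
  in characteristic 2, impossible for an element of prime order \<open>2^n - 1 \<ge> 7\<close>.
\<close>

lemma field_power_card_minus_one:
  fixes x :: "'a::{field,finite}"
  assumes "x \<noteq> 0"
  shows "x ^ (CARD('a) - 1) = 1"
proof -
  let ?U = "UNIV - {0::'a}"
  have "(\<Prod>y\<in>?U. x * y) = (\<Prod>y\<in>?U. y)"
    by (rule prod.reindex_bij_witness[of _ "\<lambda>y. y / x" "\<lambda>y. x * y"]) (use assms in auto)
  moreover have "(\<Prod>y\<in>?U. x * y) = x ^ card ?U * (\<Prod>y\<in>?U. y)"
    by (simp add: prod.distrib)
  moreover have "card ?U = CARD('a) - 1"
    by (simp add: card_Diff_subset)
  moreover have "(\<Prod>y\<in>?U. y) \<noteq> 0"
    by simp
  ultimately show ?thesis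
    by (metis mult_cancel_right1)
qed

lemma field_power_card:
  fixes x :: "'a::{field,finite}"
  shows "x ^ CARD('a) = x"
proof (cases "x = 0")
  case False
  have "CARD('a) = Suc (CARD('a) - 1)"
    by simp
  then show ?thesis
    using field_power_card_minus_one[OF False] by (metis power_Suc2 mult_1)
qed simp

lemma CHAR_eq_2_if_even_card:
  assumes "even CARD('a::{field,finite})"
  shows "CHAR('a) = 2"
proof -
  have "(-1::'a) = (-1) ^ (CARD('a) - 1)"
    using assms by (simp add: odd_pos)
  also have "\<dots> = 1"
    by (rule field_power_card_minus_one) simp
  finally have "(2::'a) = 0"
    by (metis one_add_one add.right_inverse)
  then have "CHAR('a) dvd 2"
    using of_nat_eq_0_iff_char_dvd[where 'a='a, of 2] by simp
  then show ?thesis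
    by (metis CHAR_not_1 One_nat_def prime_nat_iff two_is_prime_nat)
qed

lemma coprime_powers_eq_1_imp_eq_1:
  fixes x :: "'a::monoid_mult"
  assumes "x ^ p = 1" "x ^ m = 1" "coprime p m"
  shows "x = 1"
proof (cases "m = 0")
  case True
  then show ?thesis
    using assms by simp
next
  case False
  obtain u v where "m * u = p * v + 1"
    using bezout_nat[of m p] False assms(3) by (auto simp: coprime_iff_gcd_eq_1 gcd.commute)
  then have "x = x ^ (m * u)"
    using assms(1) by (simp add: power_add power_mult)
  then show ?thesis
    using assms(2) by (simp add: power_mult)
qed

lemma primitive_element_if_prime_card_minus_one:
  fixes x :: "'a::{field,finite}"
  assumes "prime (CARD('a) - 1)" "x \<noteq> 0" "x \<noteq> 1"
  shows "primitive_element x"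
proof -
  define p where "p = CARD('a) - 1"
  have "x ^ p = 1"
    using field_power_card_minus_one assms(2) p_def by blast
  have "inj_on (\<lambda>k. x ^ k) {..<p}"
  proof (rule linorder_inj_onI')
    fix i j assume "i \<in> {..<p}" "j \<in> {..<p}" "i < j"
    show "x ^ i \<noteq> x ^ j"
    proof
      assume "x ^ i = x ^ j"
      then have "x ^ (j - i) = 1"
        using \<open>i < j\<close> assms(2) by (simp add: power_diff)
      moreover have "coprime p (j - i)"
        using assms(1) \<open>i < j\<close> \<open>j \<in> {..<p}\<close>
        by (intro prime_imp_coprime) (auto simp: p_def dest: dvd_imp_le)
      ultimately show False
        using coprime_powers_eq_1_imp_eq_1[OF \<open>x ^ p = 1\<close>] assms(3) by blast
    qed
  qed
  then have "card ((\<lambda>k. x ^ k) ` {..<p}) = card (UNIV - {0::'a})"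
    by (simp add: card_image card_Diff_subset p_def)
  moreover have "(\<lambda>k. x ^ k) ` {..<p} \<subseteq> UNIV - {0}"
    using assms(2) by auto
  ultimately have "(\<lambda>k. x ^ k) ` {..<p} = UNIV - {0}"
    by (simp add: card_subset_eq)
  then show ?thesis
    unfolding primitive_element_def using assms(2) by blast
qed

lemma trace2_square:
  fixes x :: "'a::field"
  assumes "CHAR('a) = 2" "x ^ 2 ^ n = x"
  shows "trace2 n x ^ 2 = trace2 n x"
proof -
  let ?f = "\<lambda>i. x ^ 2 ^ i"
  have "?f 0 + (\<Sum>i<n. ?f (Suc i)) = (\<Sum>i<Suc n. ?f i)"
    by (rule sum.lessThan_Suc_shift[symmetric])
  also have "\<dots> = ?f 0 + trace2 n x"
    using assms(2) by (simp add: trace2_def add.commute)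
  finally have shift: "(\<Sum>i<n. ?f (Suc i)) = trace2 n x"
    by simp
  have "trace2 n x ^ 2 = (\<Sum>i<n. ?f i ^ 2)"
    unfolding trace2_def using assms(1) by (intro freshmans_dream_sum) simp_all
  also have "\<dots> = (\<Sum>i<n. ?f (Suc i))"
    by (simp add: power_mult[symmetric] mult.commute)
  finally show ?thesis
    using shift by simp
qed

lemma trace2_eq_0_or_1:
  fixes x :: "'a::field"
  assumes "CHAR('a) = 2" "x ^ 2 ^ n = x"
  shows "trace2 n x = 0 \<or> trace2 n x = 1"
proof -
  have "trace2 n x * (trace2 n x - 1) = 0"
    using trace2_square[OF assms] by (simp add: power2_eq_square algebra_simps)
  then show ?thesis
    by simp
qed

lemma card_trace2_fibre_le:
  fixes b :: "'a::field"
  assumes "n > 0"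
  shows "card {x. trace2 n x = b} \<le> 2 ^ (n - 1)"
proof -
  define P where "P = (\<Sum>i<n. monom (1::'a) (2 ^ i)) - [:b:]"
  have "degree P \<le> 2 ^ (n - 1)"
    unfolding P_def
  proof (intro degree_diff_le degree_sum_le)
    fix i assume "i \<in> {..<n}"
    then have "(2::nat) ^ i \<le> 2 ^ (n - 1)"
      by (intro power_increasing) auto
    then show "degree (monom (1::'a) (2 ^ i)) \<le> 2 ^ (n - 1)"
      by (simp add: degree_monom_eq)
  qed auto
  have "coeff [:b:] (2 ^ (n - 1)) = 0"
    by (metis coeff_pCons_Suc coeff_0 not0_implies_Suc power_not_zero zero_neq_numeral)
  then have "coeff P (2 ^ (n - 1)) = 1"
    using assms by (simp add: P_def coeff_sum coeff_monom power_inject_exp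
        sum.delta'[of "{..<n}" "n - 1" "\<lambda>_. 1", simplified])
  then have "P \<noteq> 0"
    by auto
  then have "card {x. poly P x = 0} \<le> degree P"
    by (rule card_poly_roots_bound)
  moreover have "{x. poly P x = 0} = {x. trace2 n x = b}"
    by (simp add: P_def trace2_def poly_sum poly_monom)
  ultimately show ?thesis
    using \<open>degree P \<le> 2 ^ (n - 1)\<close> by simp
qed

lemma card_trace2_fibre:
  fixes b :: "'a::{field,finite}"
  assumes "CARD('a) = 2 ^ n" "n > 0" "b = 0 \<or> b = 1"
  shows "card {x. trace2 n x = b} = 2 ^ (n - 1)"
proof -
  have "CHAR('a) = 2"
    using assms(1,2) by (intro CHAR_eq_2_if_even_card) simp
  then have trace_0_or_1: "trace2 n x = 0 \<or> trace2 n x = 1" for x :: 'a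
    using field_power_card[of x] assms(1) by (intro trace2_eq_0_or_1) simp_all
  have "x \<in> {x. trace2 n x = b} \<union> {x. trace2 n x = 1 - b}" for x :: 'a
    using trace_0_or_1[of x] assms(3) by auto
  then have "{x. trace2 n x = b} \<union> {x. trace2 n x = 1 - b} = UNIV"
    by blast
  moreover have "{x. trace2 n x = b} \<inter> {x. trace2 n x = 1 - b} = {}"
    using assms(3) by auto
  ultimately have "card {x. trace2 n x = b} + card {x. trace2 n x = 1 - b} = 2 * 2 ^ (n - 1)"
    using assms(1,2) card_Un_disjoint[of "{x. trace2 n x = b}" "{x. trace2 n x = 1 - b}"]
    by (simp flip: power_Suc)
  then show ?thesis
    using card_trace2_fibre_le[OF assms(2), of b] card_trace2_fibre_le[OF assms(2), of "1 - b"]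
    by linarith
qed

lemma add_inverse_eq_0_imp_square:
  fixes x :: "'a::field"
  assumes "x \<noteq> 0" "x + inverse x = 0"
  shows "x ^ 2 = -1"
proof -
  have "x * (x + inverse x) = 0"
    using assms(2) by simp
  then show ?thesis
    using assms(1) by (simp add: power2_eq_square distrib_left eq_neg_iff_add_eq_0)
qed

lemma add_inverse_eq_1_imp_cube:
  fixes x :: "'a::field"
  assumes "x \<noteq> 0" "x + inverse x = 1"
  shows "x ^ 3 = -1"
proof -
  have "x * x = x - 1"
    using assms by (simp add: field_simps)
  then have "x ^ 3 = x * (x - 1)"
    by (simp add: power3_eq_cube mult.assoc)
  also have "\<dots> = -1"
    using \<open>x * x = x - 1\<close> by (simp add: algebra_simps)
  finally show ?thesis .
qed

theorem lemma6p1: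
  fixes n :: nat and a :: "'a::{field,finite}"
  assumes "n > 0"
    and "prime (2 ^ n - 1 :: nat)"
    and "(2 ^ n - 1 :: nat) \<ge> 7"
    and "CARD('a) = 2 ^ n"
    and "a = 0 \<or> a = 1"
  shows "\<exists>\<alpha>::'a. primitive_element \<alpha> \<and> primitive_element (\<alpha> + inverse \<alpha>) \<and> trace2 n \<alpha> = a"
proof -
  have prime_card: "prime (CARD('a) - 1)"
    using assms(2,4) by simp
  have "card {0::'a, 1} < card {x. trace2 n x = a}"
    using assms(1,3) card_trace2_fibre[OF assms(4,1,5)] by (cases n) auto
  then have "\<not> {x. trace2 n x = a} \<subseteq> {0, 1}"
    using card_mono[of "{0::'a, 1}" "{x. trace2 n x = a}"] by auto
  then obtain \<alpha> where \<alpha>: "trace2 n \<alpha> = a" "\<alpha> \<noteq> 0" "\<alpha> \<noteq> 1"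
    by blast
  have small_order: "\<alpha> ^ m \<noteq> 1" if "m \<in> {2, 3}" for m
  proof
    assume "\<alpha> ^ m = 1"
    moreover have "coprime (CARD('a) - 1) m"
      using prime_card assms(3,4) that by (intro prime_imp_coprime) (auto dest: dvd_imp_le)
    ultimately show False
      using coprime_powers_eq_1_imp_eq_1 field_power_card_minus_one \<alpha>(2,3) by blast
  qed
  have "(-1::'a) = 1"
    using assms(1,4) by (intro uminus_CHAR_2 CHAR_eq_2_if_even_card) simp
  then have "\<alpha> + inverse \<alpha> \<noteq> 0" "\<alpha> + inverse \<alpha> \<noteq> 1"
    using add_inverse_eq_0_imp_square[OF \<alpha>(2)] add_inverse_eq_1_imp_cube[OF \<alpha>(2)]
      small_order[of 2] small_order[of 3] by force+
  then show ?thesis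
    using \<alpha> primitive_element_if_prime_card_minus_one[OF prime_card] by blast
qed

end
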